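(* Let $\mathcal{H}$ be a complex Hilbert space and $T\in\mathbb{B}(\mathcal{H})$. Then \[ \|T+TT^*T\|=\|T\|+\|T\|^3 . \] Moreover, if $T\neq 0$ and either $\operatorname{dist}(T,\mathbb{K}(\mathcal{H}))<\|T\|$ or $\operatorname{dist}(TT^*T,\mathbb{K}(\mathcal{H}))<\|TT^*T\|$, then there exists a unit vector $x_o\in\mathcal{H}$ such that \[ \frac{T}{\|T\|}x_o=\frac{TT^*T}{\|TT^*T\|}x_o,\qquad \|Tx_o\|=\|T\|,\qquad \|TT^*Tx_o\|=\|TT^*T\|. \]
   Context: $\mathbb{B}(\mathcal{H})$ denotes the $C^*$-algebra of bounded linear operators on $\mathcal{H}$ with the operator norm, $\mathbb{K}(\mathcal{H})$ the ideal of compact operators, and $\operatorname{dist}(S,\mathbb{K}(\mathcal{H}))=\inf\{\|S-K\|:K\in\mathbb{K}(\mathcal{H})\}$. *)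

theory Defs
  imports "HOL-Analysis.Analysis"
begin

class complex_vector = real_vector +
  fixes scaleC :: "complex \<Rightarrow> 'a \<Rightarrow> 'a" (infixr \<open>*\<^sub>C\<close> 75)
  assumes scaleC_add_right: "a *\<^sub>C (x + y) = a *\<^sub>C x + a *\<^sub>C y"
    and scaleC_add_left: "(a + b) *\<^sub>C x = a *\<^sub>C x + b *\<^sub>C x"
    and scaleC_scaleC: "a *\<^sub>C (b *\<^sub>C x) = (a * b) *\<^sub>C x"
    and scaleC_one: "1 *\<^sub>C x = x"
    and scaleR_scaleC: "scaleR r x = (complex_of_real r) *\<^sub>C x"

class complex_inner = complex_vector + real_normed_vector +
  fixes cinner :: "'a \<Rightarrow> 'a \<Rightarrow> complex"
  assumes cinner_commute: "cinner x y = cnj (cinner y x)"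
    and cinner_add_left: "cinner (x + y) z = cinner x z + cinner y z"
    and cinner_scaleC_left: "cinner (a *\<^sub>C x) y = cnj a * cinner x y"
    and cinner_self_real: "Im (cinner x x) = 0"
    and cinner_self_nonneg: "0 \<le> Re (cinner x x)"
    and cinner_self_eq_zero: "cinner x x = 0 \<longleftrightarrow> x = 0"
    and norm_eq_sqrt_cinner: "norm x = sqrt (Re (cinner x x))"

class chilbert_space = complex_inner + complete_space

definition clinear :: "('a::complex_vector \<Rightarrow> 'b::complex_vector) \<Rightarrow> bool" where
  "clinear f \<longleftrightarrow> (\<forall>x y. f (x + y) = f x + f y) \<and> (\<forall>c x. f (c *\<^sub>C x) = c *\<^sub>C f x)"

text \<open>Elements of \<open>\<bbbB>(H)\<close>: complex-linear bounded maps; their operator norm is \<open>onorm\<close>.\<close>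
definition bounded_clinear :: "('a::{complex_vector,real_normed_vector} \<Rightarrow> 'b::{complex_vector,real_normed_vector}) \<Rightarrow> bool" where
  "bounded_clinear f \<longleftrightarrow> clinear f \<and> bounded_linear f"

definition cadjoint :: "('a::complex_inner \<Rightarrow> 'a) \<Rightarrow> ('a \<Rightarrow> 'a)" where
  "cadjoint T = (THE S. \<forall>x y. cinner (T x) y = cinner x (S y))"

definition compact_op :: "('a::complex_inner \<Rightarrow> 'a) \<Rightarrow> bool" where
  "compact_op K \<longleftrightarrow> bounded_clinear K \<and> compact (closure (K ` cball 0 1))"

definition dist_compact :: "('a::complex_inner \<Rightarrow> 'a) \<Rightarrow> real" where
  "dist_compact S = Inf {onorm (\<lambda>x. S x - K x) | K. compact_op K}"

end

theory Submission
  imports Defs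
begin

text \<open>Let \<open>(x\<^sub>n)\<close> be a norming sequence of unit vectors for \<open>T\<close>. Expanding
  \<open>\<parallel>T\<^sup>*T x\<^sub>n - \<parallel>T\<parallel>\<^sup>2 x\<^sub>n\<parallel>\<^sup>2\<close> and using \<open>\<parallel>T\<^sup>*T\<parallel> \<le> \<parallel>T\<parallel>\<^sup>2\<close> shows \<open>T\<^sup>*T x\<^sub>n - \<parallel>T\<parallel>\<^sup>2 x\<^sub>n \<rightarrow> 0\<close>, so
  \<open>c T x\<^sub>n + TT\<^sup>*T x\<^sub>n\<close> is asymptotically \<open>(c + \<parallel>T\<parallel>\<^sup>2) T x\<^sub>n\<close>; this gives
  \<open>\<parallel>c T + TT\<^sup>*T\<parallel> \<ge> c\<parallel>T\<parallel> + \<parallel>T\<parallel>\<^sup>3\<close>, and the triangle inequality gives the converse.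
  If \<open>R\<close> (\<open>= T\<close> or \<open>TT\<^sup>*T\<close>, for both of which \<open>(x\<^sub>n)\<close> is norming) is closer than \<open>\<parallel>R\<parallel>\<close> to a
  compact \<open>K\<close>, then \<open>\<parallel>R\<parallel>\<^sup>2 - R\<^sup>*(R - K)\<close> is bounded below and compactness of \<open>K\<close> makes a
  subsequence of \<open>(x\<^sub>n)\<close> converge; its limit \<open>x\<^sub>o\<close> satisfies \<open>T\<^sup>*T x\<^sub>o = \<parallel>T\<parallel>\<^sup>2 x\<^sub>o\<close>, which
  yields all three identities. The adjoint, defined only implicitly, exists by the Riesz
  representation theorem.\<close>

section \<open>Inner product algebra\<close>

lemma cinner_add_right: "cinner x (y + z) = cinner x y + cinner x z"
  by (metis cinner_commute cinner_add_left complex_cnj_add)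

lemma cinner_scaleC_right: "cinner x (a *\<^sub>C y) = a * cinner x y"
  by (metis cinner_commute cinner_scaleC_left complex_cnj_mult complex_cnj_cnj)

lemma scaleC_zero_right [simp]: "c *\<^sub>C (0::'a::complex_vector) = 0"
  using scaleC_add_right[of c 0 0] by simp

lemma cinner_scaleR_left: "cinner (r *\<^sub>R x) y = complex_of_real r * cinner x y"
  by (simp add: scaleR_scaleC cinner_scaleC_left)

lemma cinner_scaleR_right: "cinner x (r *\<^sub>R y) = complex_of_real r * cinner x y"
  by (simp add: scaleR_scaleC cinner_scaleC_right)

lemma cinner_zero_left [simp]: "cinner 0 y = 0"
  using cinner_scaleR_left[of 0 0 y] by simp

lemma cinner_zero_right [simp]: "cinner x 0 = 0"
  using cinner_scaleR_right[of x 0 0] by simp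

lemma cinner_diff_left: "cinner (x - y) z = cinner x z - cinner y z"
  using cinner_add_left[of x "- y" z] cinner_scaleR_left[of "- 1" y z] by simp

lemma cinner_diff_right: "cinner x (y - z) = cinner x y - cinner x z"
  using cinner_add_right[of x y "- z"] cinner_scaleR_right[of x "- 1" z] by simp

lemma power2_norm_eq_cinner: "(norm x)\<^sup>2 = Re (cinner x x)"
  by (simp add: norm_eq_sqrt_cinner cinner_self_nonneg)

lemma cinner_self_eq_power2_norm: "cinner x x = complex_of_real ((norm x)\<^sup>2)"
  by (simp add: power2_norm_eq_cinner complex_eq_iff cinner_self_real)

lemma Re_cinner_commute: "Re (cinner y x) = Re (cinner x y)"
  by (subst cinner_commute) simp

lemma power2_norm_add: "(norm (x + y))\<^sup>2 = (norm x)\<^sup>2 + (norm y)\<^sup>2 + 2 * Re (cinner x y)"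
  by (simp add: power2_norm_eq_cinner cinner_add_left cinner_add_right Re_cinner_commute[of y x])

lemma power2_norm_diff: "(norm (x - y))\<^sup>2 = (norm x)\<^sup>2 + (norm y)\<^sup>2 - 2 * Re (cinner x y)"
  by (simp add: power2_norm_eq_cinner cinner_diff_left cinner_diff_right Re_cinner_commute[of y x])

lemma parallelogram_law:
  fixes x y :: "'a::complex_inner"
  shows "(norm (x + y))\<^sup>2 + (norm (x - y))\<^sup>2 = 2 * (norm x)\<^sup>2 + 2 * (norm y)\<^sup>2"
  by (simp add: power2_norm_add power2_norm_diff)

lemma Re_cinner_le_norm: "Re (cinner x y) \<le> norm x * norm y"
proof (cases "x = 0 \<or> y = 0")
  case True
  then show ?thesis by auto
next
  case False
  define s t where "s = norm y" and "t = norm x"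
  have st: "s > 0" "t > 0" using False by (auto simp: s_def t_def)
  have "0 \<le> (norm (s *\<^sub>R x - t *\<^sub>R y))\<^sup>2" by simp
  also have "\<dots> = s\<^sup>2 * t\<^sup>2 + t\<^sup>2 * s\<^sup>2 - 2 * (s * t) * Re (cinner x y)"
    by (simp add: power2_norm_diff cinner_scaleR_left cinner_scaleR_right power_mult_distrib
        s_def t_def abs_mult)
  finally have "2 * (s * t) * Re (cinner x y) \<le> 2 * (s * t) * (t * s)"
    by (simp add: power2_eq_square algebra_simps)
  then show ?thesis using st by (simp add: s_def t_def)
qed

lemma norm_scaleC:
  fixes x :: "'a::complex_inner"
  shows "norm (c *\<^sub>C x) = cmod c * norm x"
proof -
  have "cinner (c *\<^sub>C x) (c *\<^sub>C x) = (cnj c * c) * cinner x x"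
    by (simp add: cinner_scaleC_left cinner_scaleC_right)
  also have "\<dots> = complex_of_real ((cmod c * norm x)\<^sup>2)"
    by (simp add: complex_norm_square[symmetric] mult.commute cinner_self_eq_power2_norm
        power_mult_distrib)
  finally have "(norm (c *\<^sub>C x))\<^sup>2 = (cmod c * norm x)\<^sup>2"
    by (simp add: power2_norm_eq_cinner)
  then show ?thesis by (rule power2_eq_imp_eq) auto
qed

lemma norm_cinner_le: "cmod (cinner x y) \<le> norm x * norm y"
proof (cases "cinner x y = 0")
  case True
  then show ?thesis by simp
next
  case False
  define u where "u = cnj (cinner x y) / cmod (cinner x y)"
  have "cnj (cinner x y) * cinner x y = complex_of_real ((cmod (cinner x y))\<^sup>2)"
    by (metis complex_norm_square mult.commute of_real_power)
  then have "cinner x (u *\<^sub>C y) = complex_of_real (cmod (cinner x y))"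
    using False by (simp add: u_def cinner_scaleC_right power2_eq_square)
  then have "cmod (cinner x y) = Re (cinner x (u *\<^sub>C y))" by simp
  also have "\<dots> \<le> norm x * norm y"
    using Re_cinner_le_norm[of x "u *\<^sub>C y"] False by (simp add: norm_scaleC u_def norm_divide)
  finally show ?thesis .
qed

lemma cinner_ext: "(\<And>x. cinner x a = cinner x b) \<Longrightarrow> a = b"
  by (metis cinner_diff_right cinner_self_eq_zero diff_self eq_iff_diff_eq_0)

section \<open>Riesz representation\<close>

lemma convex_minimizing_seq_Cauchy:
  fixes M :: "'a::complex_inner set" and xs :: "nat \<Rightarrow> 'a"
  assumes "convex M" and xsM: "\<And>n. xs n \<in> M" and low: "\<And>x. x \<in> M \<Longrightarrow> \<delta> \<le> norm x"
    and lim: "(\<lambda>n. norm (xs n)) \<longlonglongrightarrow> \<delta>"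
  shows "Cauchy xs"
proof (rule metric_CauchyI)
  fix e :: real
  assume e: "0 < e"
  have \<delta>0: "0 \<le> \<delta>" using lim by (rule LIMSEQ_le_const) simp
  have gap: "(norm (x - y))\<^sup>2 \<le> 2 * (norm x)\<^sup>2 + 2 * (norm y)\<^sup>2 - 4 * \<delta>\<^sup>2"
    if "x \<in> M" "y \<in> M" for x y
  proof -
    have "(1/2) *\<^sub>R x + (1/2) *\<^sub>R y \<in> M" using convexD[OF \<open>convex M\<close> that] by simp
    then have "\<delta> \<le> norm ((1/2) *\<^sub>R (x + y))" by (simp add: low scaleR_right_distrib)
    then have "(2 * \<delta>)\<^sup>2 \<le> (norm (x + y))\<^sup>2" using \<delta>0 by (intro power_mono) auto
    then show ?thesis using parallelogram_law[of x y] by (simp add: power_mult_distrib)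
  qed
  have "(\<lambda>n. (norm (xs n))\<^sup>2) \<longlonglongrightarrow> \<delta>\<^sup>2" by (intro tendsto_intros lim)
  moreover have "\<delta>\<^sup>2 < \<delta>\<^sup>2 + e\<^sup>2 / 4" using e by simp
  ultimately obtain N where N: "\<And>n. N \<le> n \<Longrightarrow> (norm (xs n))\<^sup>2 < \<delta>\<^sup>2 + e\<^sup>2 / 4"
    by (metis (no_types, lifting) order_tendstoD(2) eventually_sequentially)
  have "dist (xs m) (xs n) < e" if "N \<le> m" "N \<le> n" for m n
  proof -
    have "(norm (xs m - xs n))\<^sup>2 < e\<^sup>2"
      using gap[OF xsM xsM, of m n] N[OF that(1)] N[OF that(2)] by simp
    then show ?thesis using e by (simp add: dist_norm power_less_imp_less_base)
  qed
  then show "\<exists>N. \<forall>m\<ge>N. \<forall>n\<ge>N. dist (xs m) (xs n) < e" by blast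
qed

lemma exists_norm_minimal:
  fixes M :: "'a::chilbert_space set"
  assumes "closed M" and "convex M" and "M \<noteq> {}"
  shows "\<exists>w\<in>M. \<forall>x\<in>M. norm w \<le> norm x"
proof -
  define \<delta> where "\<delta> = Inf (norm ` M)"
  have bdd: "bdd_below (norm ` M)" by (rule bdd_belowI[of _ 0]) auto
  have low: "\<delta> \<le> norm x" if "x \<in> M" for x
    unfolding \<delta>_def using bdd that by (simp add: cInf_lower)
  have "\<exists>x\<in>M. norm x < \<delta> + inverse (real (Suc n))" for n
    using cInf_lessD[of "norm ` M" "\<delta> + inverse (real (Suc n))"] \<open>M \<noteq> {}\<close>
    by (auto simp: \<delta>_def)
  then obtain xs where xsM: "\<And>n. xs n \<in> M"
    and xs: "\<And>n. norm (xs n) < \<delta> + inverse (real (Suc n))"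
    by metis
  have lim: "(\<lambda>n. norm (xs n)) \<longlonglongrightarrow> \<delta>"
  proof (rule tendsto_sandwich[of "\<lambda>n. \<delta>" _ _ "\<lambda>n. \<delta> + inverse (real (Suc n))"])
    show "(\<lambda>n. \<delta> + inverse (real (Suc n))) \<longlonglongrightarrow> \<delta>"
      using tendsto_add[OF tendsto_const LIMSEQ_inverse_real_of_nat] by simp
    show "\<forall>\<^sub>F n in sequentially. \<delta> \<le> norm (xs n)"
      using low xsM by (simp add: always_eventually)
    show "\<forall>\<^sub>F n in sequentially. norm (xs n) \<le> \<delta> + inverse (real (Suc n))"
      using xs by (simp add: always_eventually less_imp_le)
  qed simp
  have "Cauchy xs" using convex_minimizing_seq_Cauchy[OF \<open>convex M\<close> xsM low lim] .
  then obtain w where w: "xs \<longlonglongrightarrow> w" using Cauchy_convergent_iff convergent_def by blast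
  have "w \<in> M" using closed_sequentially[OF \<open>closed M\<close> xsM w] .
  moreover have "norm w = \<delta>" using LIMSEQ_unique[OF tendsto_norm[OF w] lim] .
  ultimately show ?thesis using low by auto
qed

lemma Re_cinner_eq_0_if_norm_minimal:
  fixes w n :: "'a::complex_inner"
  assumes "\<And>t::real. norm w \<le> norm (w + t *\<^sub>R n)"
  shows "Re (cinner w n) = 0"
proof (rule ccontr)
  define r s where "r = Re (cinner w n)" and "s = (norm n)\<^sup>2"
  assume "Re (cinner w n) \<noteq> 0"
  then have "r \<noteq> 0" and "s > 0" by (auto simp: r_def s_def)
  define t where "t = - r / s"
  have "(norm w)\<^sup>2 \<le> (norm (w + t *\<^sub>R n))\<^sup>2"
    using assms[of t] by (simp add: power_mono)
  also have "\<dots> = (norm w)\<^sup>2 + t\<^sup>2 * s + 2 * t * r"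
    by (simp add: power2_norm_add cinner_scaleR_right s_def r_def power_mult_distrib)
  also have "\<dots> = (norm w)\<^sup>2 - r\<^sup>2 / s"
    using \<open>s > 0\<close> by (simp add: t_def power2_eq_square field_simps)
  finally show False using \<open>r \<noteq> 0\<close> \<open>s > 0\<close> by (simp add: divide_le_0_iff)
qed

text \<open>The representing vector is a multiple of the element of minimal norm in the closed
  affine hyperplane \<open>f = 1\<close>, which is orthogonal to the kernel of \<open>f\<close>.\<close>
lemma riesz_representation:
  fixes f :: "'a::chilbert_space \<Rightarrow> complex"
  assumes "bounded_linear f" and hom: "\<And>c x. f (c *\<^sub>C x) = c * f x"
  shows "\<exists>z. \<forall>x. f x = cinner z x"
proof (cases "\<forall>x. f x = 0")
  case True
  then show ?thesis by (intro exI[of _ 0]) simp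
next
  case False
  interpret f: bounded_linear f by fact
  define M where "M = {x. f x = 1}"
  obtain v where "f v \<noteq> 0" using False by auto
  then have "(1 / f v) *\<^sub>C v \<in> M" by (simp add: M_def hom)
  moreover have "closed M"
    unfolding M_def by (rule closed_Collect_eq[OF linear_continuous_on[OF assms(1)] continuous_on_const])
  moreover have "convex M"
  proof (rule convexI)
    fix x y u v
    assume "x \<in> M" "y \<in> M" and uv: "u + v = (1::real)"
    then have "f (u *\<^sub>R x + v *\<^sub>R y) = u *\<^sub>R 1 + v *\<^sub>R 1"
      by (simp add: M_def f.add f.scaleR)
    also have "\<dots> = 1" by (metis uv scaleR_left_distrib scaleR_one)
    finally show "u *\<^sub>R x + v *\<^sub>R y \<in> M" by (simp add: M_def)
  qed
  ultimately have "\<exists>w\<in>M. \<forall>x\<in>M. norm w \<le> norm x"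
    by (intro exists_norm_minimal) auto
  then obtain w where wM: "w \<in> M" and wmin: "\<And>x. x \<in> M \<Longrightarrow> norm w \<le> norm x"
    by blast
  have orth: "cinner w n = 0" if "f n = 0" for n
  proof -
    have "Re (cinner w m) = 0" if "f m = 0" for m
      using wM that by (intro Re_cinner_eq_0_if_norm_minimal wmin) (simp add: M_def f.add f.scaleR)
    from this[of n] this[of "\<i> *\<^sub>C n"] \<open>f n = 0\<close> show ?thesis
      by (simp add: hom cinner_scaleC_right complex_eq_iff)
  qed
  have w0: "w \<noteq> 0" using wM f.zero by (auto simp: M_def)
  have "f x = cinner ((1 / (norm w)\<^sup>2) *\<^sub>R w) x" for x
  proof -
    have "f (x - f x *\<^sub>C w) = 0" using wM by (simp add: M_def f.diff hom)
    then have "cinner w (x - f x *\<^sub>C w) = 0" by (rule orth)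
    then have "cinner w x = f x * complex_of_real ((norm w)\<^sup>2)"
      by (simp add: cinner_diff_right cinner_scaleC_right cinner_self_eq_power2_norm)
    then show ?thesis using w0 by (simp add: cinner_scaleR_left field_simps)
  qed
  then show ?thesis by blast
qed

section \<open>The adjoint\<close>

lemma cadjoint_exists:
  fixes T :: "'a::chilbert_space \<Rightarrow> 'a"
  assumes "bounded_clinear T"
  shows "\<exists>S. \<forall>x y. cinner (T x) y = cinner x (S y)"
proof -
  have cl: "clinear T" and bl: "bounded_linear T" using assms by (auto simp: bounded_clinear_def)
  interpret T: bounded_linear T by fact
  have "\<exists>z. \<forall>x. cinner y (T x) = cinner z x" for y
  proof (rule riesz_representation)
    show "bounded_linear (\<lambda>x. cinner y (T x))"
    proof (rule bounded_linear_intro[where K = "norm y * onorm T"])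
      show "cinner y (T (a + b)) = cinner y (T a) + cinner y (T b)" for a b
        by (simp add: T.add cinner_add_right)
      show "cinner y (T (r *\<^sub>R a)) = r *\<^sub>R cinner y (T a)" for r a
        by (simp add: T.scaleR cinner_scaleR_right scaleR_conv_of_real)
      show "norm (cinner y (T a)) \<le> norm a * (norm y * onorm T)" for a
      proof -
        have "norm (cinner y (T a)) \<le> norm y * norm (T a)" by (simp add: norm_cinner_le)
        also have "\<dots> \<le> norm y * (onorm T * norm a)" by (simp add: onorm[OF bl] mult_left_mono)
        finally show ?thesis by (simp add: algebra_simps)
      qed
    qed
    show "cinner y (T (c *\<^sub>C x)) = c * cinner y (T x)" for c x
      using cl by (simp add: clinear_def cinner_scaleC_right)
  qed
  then obtain S where "\<And>y x. cinner y (T x) = cinner (S y) x" by metis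
  then show ?thesis by (metis cinner_commute)
qed

lemma cinner_cadjoint:
  fixes T :: "'a::chilbert_space \<Rightarrow> 'a"
  assumes "bounded_clinear T"
  shows "cinner (T x) y = cinner x (cadjoint T y)"
proof -
  obtain S where S: "\<forall>x y. cinner (T x) y = cinner x (S y)"
    using cadjoint_exists[OF assms] by blast
  have "cadjoint T = S"
    unfolding cadjoint_def
  proof (rule the_equality)
    fix S' assume "\<forall>x y. cinner (T x) y = cinner x (S' y)"
    with S show "S' = S" by (metis cinner_ext ext)
  qed (fact S)
  with S show ?thesis by simp
qed

lemma norm_cadjoint_le:
  fixes T :: "'a::chilbert_space \<Rightarrow> 'a"
  assumes T: "bounded_clinear T"
  shows "norm (cadjoint T y) \<le> onorm T * norm y"
proof -
  define z where "z = cadjoint T y"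
  have bl: "bounded_linear T" using T by (simp add: bounded_clinear_def)
  have "(norm z)\<^sup>2 = Re (cinner (T z) y)" by (simp add: cinner_cadjoint[OF T] power2_norm_eq_cinner z_def)
  also have "\<dots> \<le> norm (T z) * norm y"
    using complex_Re_le_cmod norm_cinner_le order_trans by blast
  also have "\<dots> \<le> onorm T * norm z * norm y"
    using onorm[OF bl] by (simp add: mult_right_mono)
  finally have "norm z * norm z \<le> (onorm T * norm y) * norm z"
    by (simp add: power2_eq_square algebra_simps)
  then show ?thesis
    using onorm_pos_le[OF bl] by (cases "z = 0") (auto simp: z_def)
qed

lemma bounded_clinear_cadjoint:
  fixes T :: "'a::chilbert_space \<Rightarrow> 'a"
  assumes T: "bounded_clinear T"
  shows "bounded_clinear (cadjoint T)"
proof -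
  have add: "cadjoint T (a + b) = cadjoint T a + cadjoint T b" for a b
    by (rule cinner_ext) (simp add: cinner_cadjoint[OF T, symmetric] cinner_add_right)
  have scale: "cadjoint T (c *\<^sub>C a) = c *\<^sub>C cadjoint T a" for c a
    by (rule cinner_ext) (simp add: cinner_cadjoint[OF T, symmetric] cinner_scaleC_right)
  have "bounded_linear (cadjoint T)"
    by (rule bounded_linear_intro[where K = "onorm T"])
      (simp_all add: add scaleR_scaleC scale norm_cadjoint_le[OF T] mult.commute)
  with add scale show ?thesis by (simp add: bounded_clinear_def clinear_def)
qed

lemma power2_norm_eq_cinner_cadjoint:
  fixes T :: "'a::chilbert_space \<Rightarrow> 'a"
  assumes "bounded_clinear T"
  shows "(norm (T x))\<^sup>2 = Re (cinner x (cadjoint T (T x)))"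
  by (simp add: cinner_cadjoint[OF assms, symmetric] power2_norm_eq_cinner)

lemma bounded_clinear_comp:
  assumes "bounded_clinear f" and "bounded_clinear g"
  shows "bounded_clinear (f \<circ> g)"
  using assms unfolding bounded_clinear_def clinear_def
  by (auto intro: bounded_linear_compose simp: o_def)

section \<open>Norming sequences\<close>

lemma onorm_eq_tendsto_norm:
  fixes f :: "'a::real_normed_vector \<Rightarrow> 'b::real_normed_vector"
  assumes "bounded_linear f" and "\<And>x. norm (f x) \<le> L * norm x"
    and "\<And>n. norm (y n) = 1" and lim: "(\<lambda>n. norm (f (y n))) \<longlonglongrightarrow> L"
  shows "onorm f = L"
proof (rule antisym)
  have "0 \<le> L" using lim by (rule LIMSEQ_le_const) simp
  then show "onorm f \<le> L" using assms(2) by (rule onorm_bound)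
  show "L \<le> onorm f"
    using lim by (rule LIMSEQ_le_const2) (metis assms(1,3) onorm mult.right_neutral)
qed

lemma exists_norming_seq:
  fixes f :: "'a::real_normed_vector \<Rightarrow> 'b::real_normed_vector"
  assumes "bounded_linear f" and "0 < onorm f"
  obtains y where "\<And>n. norm (y n) = 1" and "(\<lambda>n. norm (f (y n))) \<longlonglongrightarrow> onorm f"
proof -
  interpret f: bounded_linear f by fact
  have "\<exists>x. norm x = 1 \<and> onorm f - e < norm (f x)" if "0 < e" for e
  proof (rule ccontr)
    assume "\<not> ?thesis"
    then have h: "norm (f x) \<le> onorm f - e" if "norm x = 1" for x
      using that by (auto simp: not_less)
    have "norm (f x) \<le> max 0 (onorm f - e) * norm x" for x
    proof (cases "x = 0")
      case False
      have "norm (f x) = norm x * norm (f ((1 / norm x) *\<^sub>R x))"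
        using False by (simp add: f.scaleR)
      also have "\<dots> \<le> norm x * max 0 (onorm f - e)"
        using h[of "(1 / norm x) *\<^sub>R x"] False by (intro mult_left_mono) auto
      finally show ?thesis by (simp add: mult.commute)
    qed simp
    then have "onorm f \<le> max 0 (onorm f - e)" by (intro onorm_bound) auto
    then show False using \<open>0 < onorm f\<close> \<open>0 < e\<close> by simp
  qed
  then have "\<forall>n. \<exists>x. norm x = 1 \<and> onorm f - inverse (real (Suc n)) < norm (f x)"
    by simp
  then obtain y where y1: "\<And>n. norm (y n) = 1"
    and y: "\<And>n. onorm f - inverse (real (Suc n)) < norm (f (y n))"
    by metis
  have "(\<lambda>n. norm (f (y n))) \<longlonglongrightarrow> onorm f"
  proof (rule tendsto_sandwich[of "\<lambda>n. onorm f - inverse (real (Suc n))" _ _ "\<lambda>n. onorm f"])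
    show "\<forall>\<^sub>F n in sequentially. onorm f - inverse (real (Suc n)) \<le> norm (f (y n))"
      using y by (simp add: always_eventually less_imp_le)
    show "\<forall>\<^sub>F n in sequentially. norm (f (y n)) \<le> onorm f"
      using onorm[OF assms(1)] y1 by (intro always_eventually allI) (metis mult.right_neutral)
    show "(\<lambda>n. onorm f - inverse (real (Suc n))) \<longlonglongrightarrow> onorm f"
      using tendsto_diff[OF tendsto_const LIMSEQ_inverse_real_of_nat] by simp
  qed simp
  with y1 that show ?thesis by blast
qed

lemma tendsto_norm_if_diff_tendsto_zero:
  fixes f g :: "nat \<Rightarrow> 'a::real_normed_vector"
  assumes "(\<lambda>n. f n - g n) \<longlonglongrightarrow> 0" and "(\<lambda>n. norm (g n)) \<longlonglongrightarrow> L"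
  shows "(\<lambda>n. norm (f n)) \<longlonglongrightarrow> L"
proof -
  have "(\<lambda>n. norm (f n) - norm (g n)) \<longlonglongrightarrow> 0"
  proof (rule Lim_null_comparison)
    show "\<forall>\<^sub>F n in sequentially. norm (norm (f n) - norm (g n)) \<le> norm (f n - g n)"
      by (simp add: norm_triangle_ineq3)
    show "(\<lambda>n. norm (f n - g n)) \<longlonglongrightarrow> 0" using assms(1) by (rule tendsto_norm_zero)
  qed
  from tendsto_add[OF this assms(2)] show ?thesis by simp
qed

lemma cadjoint_norming_seq_approx_eigen:
  fixes R :: "'a::chilbert_space \<Rightarrow> 'a" and y :: "nat \<Rightarrow> 'a"
  assumes R: "bounded_clinear R" and y1: "\<And>n. norm (y n) = 1"
    and lim: "(\<lambda>n. norm (R (y n))) \<longlonglongrightarrow> onorm R"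
  shows "(\<lambda>n. cadjoint R (R (y n)) - (onorm R)\<^sup>2 *\<^sub>R y n) \<longlonglongrightarrow> 0"
proof -
  define b where "b = (onorm R)\<^sup>2"
  have bl: "bounded_linear R" using R by (simp add: bounded_clinear_def)
  have bound: "(norm (cadjoint R (R v) - b *\<^sub>R v))\<^sup>2 \<le> 2 * b\<^sup>2 - 2 * b * (norm (R v))\<^sup>2"
    if v: "norm v = 1" for v
  proof -
    have "norm (cadjoint R (R v)) \<le> onorm R * norm (R v)" by (rule norm_cadjoint_le[OF R])
    also have "\<dots> \<le> onorm R * onorm R"
      using onorm[OF bl, of v] v onorm_pos_le[OF bl] by (simp add: mult_left_mono)
    finally have "norm (cadjoint R (R v)) \<le> b" by (simp add: b_def power2_eq_square)
    then have "(norm (cadjoint R (R v)))\<^sup>2 \<le> b\<^sup>2" by (rule power_mono) simp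
    moreover have "Re (cinner (cadjoint R (R v)) (b *\<^sub>R v)) = b * (norm (R v))\<^sup>2"
      by (simp add: cinner_scaleR_right Re_cinner_commute power2_norm_eq_cinner_cadjoint[OF R])
    ultimately show ?thesis by (simp add: power2_norm_diff v)
  qed
  have "(\<lambda>n. cadjoint R (R (y n)) - b *\<^sub>R y n) \<longlonglongrightarrow> 0"
  proof (rule Lim_null_comparison)
    show "\<forall>\<^sub>F n in sequentially.
        norm (cadjoint R (R (y n)) - b *\<^sub>R y n) \<le> sqrt (2 * b\<^sup>2 - 2 * b * (norm (R (y n)))\<^sup>2)"
      using bound y1 by (intro always_eventually allI real_le_rsqrt) auto
    have "(\<lambda>n. sqrt (2 * b\<^sup>2 - 2 * b * (norm (R (y n)))\<^sup>2)) \<longlonglongrightarrow> sqrt (2 * b\<^sup>2 - 2 * b * b)"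
      by (intro tendsto_intros) (use lim in \<open>simp add: b_def tendsto_power\<close>)
    then show "(\<lambda>n. sqrt (2 * b\<^sup>2 - 2 * b * (norm (R (y n)))\<^sup>2)) \<longlonglongrightarrow> 0"
      by (simp add: power2_eq_square)
  qed
  then show ?thesis by (simp add: b_def)
qed

lemma tendsto_norm_scaleR_plus_T_cadjoint_T:
  fixes T :: "'a::chilbert_space \<Rightarrow> 'a" and c :: real
  assumes T: "bounded_clinear T" and "0 \<le> c" and y1: "\<And>n. norm (y n) = 1"
    and lim: "(\<lambda>n. norm (T (y n))) \<longlonglongrightarrow> onorm T"
  shows "(\<lambda>n. norm (c *\<^sub>R T (y n) + T (cadjoint T (T (y n))))) \<longlonglongrightarrow> c * onorm T + onorm T ^ 3"
proof (rule tendsto_norm_if_diff_tendsto_zero)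
  define a where "a = (onorm T)\<^sup>2"
  interpret T: bounded_linear T using T by (simp add: bounded_clinear_def)
  have "(\<lambda>n. T (cadjoint T (T (y n)) - a *\<^sub>R y n)) \<longlonglongrightarrow> T 0"
    using T.tendsto[OF cadjoint_norming_seq_approx_eigen[OF T y1 lim]] by (simp add: a_def)
  then show "(\<lambda>n. (c *\<^sub>R T (y n) + T (cadjoint T (T (y n)))) - (c + a) *\<^sub>R T (y n)) \<longlonglongrightarrow> 0"
    by (simp add: T.diff T.scaleR algebra_simps)
  have norm_eq: "norm ((c + a) *\<^sub>R T (y n)) = (c + a) * norm (T (y n))" for n
    using \<open>0 \<le> c\<close> by (simp only: norm_scaleR) (simp add: a_def)
  have limit_eq: "c * onorm T + onorm T ^ 3 = (c + a) * onorm T"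
    by (simp add: a_def algebra_simps power3_eq_cube power2_eq_square)
  show "(\<lambda>n. norm ((c + a) *\<^sub>R T (y n))) \<longlonglongrightarrow> c * onorm T + onorm T ^ 3"
    unfolding norm_eq limit_eq by (rule tendsto_mult_left[OF lim])
qed

lemma onorm_scaleR_plus_T_cadjoint_T:
  fixes T :: "'a::chilbert_space \<Rightarrow> 'a" and c :: real
  assumes T: "bounded_clinear T" and "0 \<le> c"
  shows "onorm (\<lambda>x. c *\<^sub>R T x + T (cadjoint T (T x))) = c * onorm T + onorm T ^ 3"
proof (cases "onorm T = 0")
  case True
  then have "T = (\<lambda>x. 0)"
    using T onorm_eq_0 by (auto simp: bounded_clinear_def)
  with True show ?thesis by (simp add: onorm_zero)
next
  case False
  have bl: "bounded_linear T" and blTs: "bounded_linear (cadjoint T)"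
    using T bounded_clinear_cadjoint[OF T] by (simp_all add: bounded_clinear_def)
  then have "0 < onorm T" using False onorm_pos_le by (simp add: order_less_le)
  then obtain y where y1: "\<And>n. norm (y n) = 1" and lim: "(\<lambda>n. norm (T (y n))) \<longlonglongrightarrow> onorm T"
    using exists_norming_seq[OF bl] by blast
  show ?thesis
  proof (rule onorm_eq_tendsto_norm)
    show "bounded_linear (\<lambda>x. c *\<^sub>R T x + T (cadjoint T (T x)))"
      by (rule bounded_linear_add[OF bounded_linear_compose[OF bounded_linear_scaleR_right bl]
            bounded_linear_compose[OF bl bounded_linear_compose[OF blTs bl]]])
    show "norm (c *\<^sub>R T x + T (cadjoint T (T x))) \<le> (c * onorm T + onorm T ^ 3) * norm x" for x
    proof -
      have "norm (T (cadjoint T (T x))) \<le> onorm T * norm (cadjoint T (T x))"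
        by (rule onorm[OF bl])
      also have "\<dots> \<le> onorm T * (onorm T * norm (T x))"
        using norm_cadjoint_le[OF T] onorm_pos_le[OF bl] by (rule mult_left_mono)
      also have "\<dots> \<le> onorm T * (onorm T * (onorm T * norm x))"
        using onorm[OF bl, of x] onorm_pos_le[OF bl] by (simp add: mult_left_mono)
      finally have "norm (T (cadjoint T (T x))) \<le> onorm T * (onorm T * (onorm T * norm x))" .
      moreover have "norm (c *\<^sub>R T x) \<le> c * (onorm T * norm x)"
        using onorm[OF bl, of x] \<open>0 \<le> c\<close> by (simp add: mult_left_mono)
      ultimately show ?thesis
        using norm_triangle_ineq[of "c *\<^sub>R T x" "T (cadjoint T (T x))"]
        by (simp add: algebra_simps power3_eq_cube)
    qed
    show "norm (y n) = 1" for n by (rule y1)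
    show "(\<lambda>n. norm (c *\<^sub>R T (y n) + T (cadjoint T (T (y n))))) \<longlonglongrightarrow> c * onorm T + onorm T ^ 3"
      by (rule tendsto_norm_scaleR_plus_T_cadjoint_T[OF T \<open>0 \<le> c\<close> y1 lim])
  qed
qed

lemma onorm_T_cadjoint_T:
  fixes T :: "'a::chilbert_space \<Rightarrow> 'a"
  assumes "bounded_clinear T"
  shows "onorm (T \<circ> cadjoint T \<circ> T) = onorm T ^ 3"
  using onorm_scaleR_plus_T_cadjoint_T[OF assms, of 0] by (simp add: comp_def)

section \<open>Compact perturbations and the eigenvector\<close>

lemma compact_op_convergent_subseq:
  fixes K :: "'a::complex_inner \<Rightarrow> 'a" and y :: "nat \<Rightarrow> 'a"
  assumes "compact_op K" and "\<And>n. norm (y n) \<le> 1"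
  obtains l r where "strict_mono r" and "(\<lambda>n. K (y (r n))) \<longlonglongrightarrow> l"
proof -
  have "seq_compact (closure (K ` cball 0 1))"
    using assms(1) by (simp add: compact_op_def compact_imp_seq_compact)
  moreover have "\<forall>n. K (y n) \<in> closure (K ` cball 0 1)"
    using assms(2) by (simp add: closure_subset[THEN subsetD])
  ultimately obtain l r where "l \<in> closure (K ` cball 0 1)" and "strict_mono r"
    and "((\<lambda>n. K (y n)) \<circ> r) \<longlonglongrightarrow> l"
    by (rule seq_compactE)
  with that show ?thesis by (simp add: o_def)
qed

lemma Cauchy_if_bounded_below:
  fixes L :: "'a::real_normed_vector \<Rightarrow> 'b::real_normed_vector"
  assumes "linear L" and "0 < m" and low: "\<And>v. m * norm v \<le> norm (L v)"
    and "Cauchy (\<lambda>n. L (z n))"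
  shows "Cauchy z"
proof (rule metric_CauchyI)
  fix e :: real
  assume "0 < e"
  then obtain N where N: "\<And>k n. N \<le> k \<Longrightarrow> N \<le> n \<Longrightarrow> dist (L (z k)) (L (z n)) < m * e"
    using metric_CauchyD[OF assms(4), of "m * e"] \<open>0 < m\<close> by auto
  have "dist (z k) (z n) < e" if "N \<le> k" "N \<le> n" for k n
  proof -
    have "m * dist (z k) (z n) \<le> dist (L (z k)) (L (z n))"
      using low[of "z k - z n"] by (simp add: dist_norm linear_diff[OF assms(1)])
    then have "m * dist (z k) (z n) < m * e" using N[OF that] by linarith
    then show ?thesis using \<open>0 < m\<close> by simp
  qed
  then show "\<exists>N. \<forall>k\<ge>N. \<forall>n\<ge>N. dist (z k) (z n) < e" by blast
qed

text \<open>Since \<open>\<parallel>R - K\<parallel> < \<parallel>R\<parallel>\<close>, the operator \<open>L = \<parallel>R\<parallel>\<^sup>2 - R\<^sup>*(R - K)\<close> is bounded below, while on the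
  norming sequence it differs from \<open>R\<^sup>*K\<close> by a null sequence; so \<open>L y\<close> converges along a
  subsequence on which \<open>K y\<close> does, and then so does \<open>y\<close>.\<close>
lemma norming_seq_has_convergent_subseq:
  fixes R K :: "'a::chilbert_space \<Rightarrow> 'a" and y :: "nat \<Rightarrow> 'a"
  assumes R: "bounded_clinear R" and K: "compact_op K"
    and less: "onorm (\<lambda>x. R x - K x) < onorm R"
    and y1: "\<And>n. norm (y n) = 1" and lim: "(\<lambda>n. norm (R (y n))) \<longlonglongrightarrow> onorm R"
  shows "\<exists>x r. strict_mono r \<and> (y \<circ> r) \<longlonglongrightarrow> x"
proof -
  define Rs where "Rs = cadjoint R"
  define b c where "b = (onorm R)\<^sup>2" and "c = onorm (\<lambda>x. R x - K x)"
  define L where "L = (\<lambda>v. b *\<^sub>R v - Rs (R v - K v))"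
  have bl: "bounded_linear R" using R by (simp add: bounded_clinear_def)
  have blK: "bounded_linear K" using K by (simp add: compact_op_def bounded_clinear_def)
  have blD: "bounded_linear (\<lambda>x. R x - K x)" using bl blK by (rule bounded_linear_sub)
  have blRs: "bounded_linear Rs"
    using bounded_clinear_cadjoint[OF R] by (simp add: Rs_def bounded_clinear_def)
  interpret Rs: bounded_linear Rs by fact
  have "0 \<le> c" unfolding c_def by (rule onorm_pos_le[OF blD])
  then have R0: "0 < onorm R" using less c_def by simp
  have gap: "0 < b - onorm R * c" using R0 less by (simp add: b_def c_def power2_eq_square)
  have low: "(b - onorm R * c) * norm v \<le> norm (L v)" for v
  proof -
    have "norm (Rs (R v - K v)) \<le> onorm R * norm (R v - K v)"
      unfolding Rs_def by (rule norm_cadjoint_le[OF R])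
    also have "\<dots> \<le> onorm R * (c * norm v)"
      using onorm[OF blD, of v] R0 by (simp add: c_def mult_left_mono)
    finally have "norm (Rs (R v - K v)) \<le> onorm R * c * norm v" by (simp add: mult.assoc)
    moreover have "b * norm v - norm (Rs (R v - K v)) \<le> norm (L v)"
      unfolding L_def using norm_triangle_ineq2[of "b *\<^sub>R v" "Rs (R v - K v)"]
      by (simp add: b_def)
    ultimately show ?thesis by (simp add: algebra_simps)
  qed
  obtain l r where r: "strict_mono r" and Kl: "(\<lambda>n. K (y (r n))) \<longlonglongrightarrow> l"
    by (rule compact_op_convergent_subseq[OF K, of y]) (simp add: y1)
  have L_eq: "L v = Rs (K v) - (Rs (R v) - b *\<^sub>R v)" for v
    by (simp add: L_def Rs.diff)
  have "(\<lambda>n. Rs (R (y (r n))) - b *\<^sub>R y (r n)) \<longlonglongrightarrow> 0"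
    using LIMSEQ_subseq_LIMSEQ[OF cadjoint_norming_seq_approx_eigen[OF R y1 lim] r]
    by (simp add: o_def Rs_def b_def)
  then have L_Cauchy: "Cauchy (\<lambda>n. L (y (r n)))"
    unfolding L_eq by (rule LIMSEQ_imp_Cauchy[OF tendsto_diff[OF Rs.tendsto[OF Kl]]])
  have "linear L"
    unfolding L_def by (rule bounded_linear.linear[OF bounded_linear_sub[OF
          bounded_linear_scaleR_right bounded_linear_compose[OF blRs blD]]])
  then have "Cauchy (\<lambda>n. y (r n))" by (rule Cauchy_if_bounded_below[OF _ gap low L_Cauchy])
  then obtain x where "(\<lambda>n. y (r n)) \<longlonglongrightarrow> x" using Cauchy_convergent_iff convergent_def by blast
  with r show ?thesis unfolding comp_def by blast
qed

lemma compact_op_zero: "compact_op (\<lambda>x::'a::complex_inner. 0)"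
proof -
  have image_eq: "(\<lambda>x::'a. 0) ` cball 0 1 = {0}" by (rule image_constant[of 0]) simp
  show ?thesis unfolding compact_op_def bounded_clinear_def clinear_def image_eq
    by (simp add: bounded_linear_zero)
qed

lemma dist_compact_less:
  fixes S :: "'a::complex_inner \<Rightarrow> 'a"
  assumes "dist_compact S < z"
  obtains K where "compact_op K" and "onorm (\<lambda>x. S x - K x) < z"
proof -
  have "{onorm (\<lambda>x. S x - K x) | K. compact_op K} \<noteq> {}" using compact_op_zero by blast
  from cInf_lessD[OF this] assms have "\<exists>K. compact_op K \<and> onorm (\<lambda>x. S x - K x) < z"
    unfolding dist_compact_def by blast
  with that show ?thesis by blast
qed

lemma exists_unit_cadjoint_eigenvector:
  fixes T :: "'a::chilbert_space \<Rightarrow> 'a"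
  assumes T: "bounded_clinear T" and "T \<noteq> (\<lambda>x. 0)"
    and "dist_compact T < onorm T \<or>
      dist_compact (T \<circ> cadjoint T \<circ> T) < onorm (T \<circ> cadjoint T \<circ> T)"
  shows "\<exists>x. norm x = 1 \<and> cadjoint T (T x) = (onorm T)\<^sup>2 *\<^sub>R x"
proof -
  define S where "S = T \<circ> cadjoint T \<circ> T"
  have bl: "bounded_linear T" and blTs: "bounded_linear (cadjoint T)"
    using T bounded_clinear_cadjoint[OF T] by (simp_all add: bounded_clinear_def)
  have "onorm T \<noteq> 0" using \<open>T \<noteq> (\<lambda>x. 0)\<close> onorm_eq_0[OF bl] by auto
  then have "0 < onorm T" using onorm_pos_le[OF bl] by simp
  then obtain y where y1: "\<And>n. norm (y n) = 1" and lim: "(\<lambda>n. norm (T (y n))) \<longlonglongrightarrow> onorm T"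
    using exists_norming_seq[OF bl] by blast
  have "\<exists>x r. strict_mono r \<and> (y \<circ> r) \<longlonglongrightarrow> x"
  proof (cases "dist_compact T < onorm T")
    case True
    then obtain K where "compact_op K" and "onorm (\<lambda>x. T x - K x) < onorm T"
      by (rule dist_compact_less)
    then show ?thesis by (rule norming_seq_has_convergent_subseq[OF T _ _ y1 lim])
  next
    case False
    with assms(3) have "dist_compact S < onorm S" by (simp add: S_def)
    then obtain K where K: "compact_op K" and less: "onorm (\<lambda>x. S x - K x) < onorm S"
      by (rule dist_compact_less)
    have S: "bounded_clinear S"
      unfolding S_def by (rule bounded_clinear_comp[OF bounded_clinear_comp[OF T bounded_clinear_cadjoint[OF T]] T])
    have "(\<lambda>n. norm (S (y n))) \<longlonglongrightarrow> onorm S"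
      using tendsto_norm_scaleR_plus_T_cadjoint_T[OF T order_refl y1 lim] onorm_T_cadjoint_T[OF T]
      by (simp add: S_def)
    then show ?thesis by (rule norming_seq_has_convergent_subseq[OF S K less y1])
  qed
  then obtain x r where r: "strict_mono r" and x: "(y \<circ> r) \<longlonglongrightarrow> x" by blast
  have "norm x = 1"
    using LIMSEQ_unique[OF tendsto_norm[OF x]] y1 by (simp add: o_def)
  moreover have "cadjoint T (T x) - (onorm T)\<^sup>2 *\<^sub>R x = 0"
  proof (rule LIMSEQ_unique)
    show "(\<lambda>n. cadjoint T (T ((y \<circ> r) n)) - (onorm T)\<^sup>2 *\<^sub>R (y \<circ> r) n)
        \<longlonglongrightarrow> cadjoint T (T x) - (onorm T)\<^sup>2 *\<^sub>R x"
      by (intro tendsto_diff tendsto_scaleR tendsto_const bounded_linear.tendsto[OF blTs]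
          bounded_linear.tendsto[OF bl] x)
    show "(\<lambda>n. cadjoint T (T ((y \<circ> r) n)) - (onorm T)\<^sup>2 *\<^sub>R (y \<circ> r) n) \<longlonglongrightarrow> 0"
      using LIMSEQ_subseq_LIMSEQ[OF cadjoint_norming_seq_approx_eigen[OF T y1 lim] r]
      by (simp add: o_def)
  qed
  ultimately show ?thesis by auto
qed

lemma norm_apply_eq_onorm_if_cadjoint_eigen:
  fixes T :: "'a::chilbert_space \<Rightarrow> 'a"
  assumes T: "bounded_clinear T" and "norm x = 1"
    and eigen: "cadjoint T (T x) = (onorm T)\<^sup>2 *\<^sub>R x"
  shows "norm (T x) = onorm T"
proof -
  have "(norm (T x))\<^sup>2 = (onorm T)\<^sup>2"
    using power2_norm_eq_cinner_cadjoint[OF T, of x] \<open>norm x = 1\<close>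
    by (simp add: eigen cinner_scaleR_right power2_norm_eq_cinner[symmetric])
  moreover have "0 \<le> onorm T" using T by (simp add: onorm_pos_le bounded_clinear_def)
  ultimately show ?thesis by (simp add: power2_eq_iff_nonneg)
qed

theorem corollary2p9:
  fixes T :: "'a::chilbert_space \<Rightarrow> 'a"
  assumes "bounded_clinear T"
  shows "onorm (\<lambda>x. T x + T (cadjoint T (T x))) = onorm T + onorm T ^ 3 \<and>
    (T \<noteq> (\<lambda>x. 0) \<and>
         (dist_compact T < onorm T \<or>
          dist_compact (T \<circ> cadjoint T \<circ> T) < onorm (T \<circ> cadjoint T \<circ> T)) \<longrightarrow>
         (\<exists>xo. norm xo = 1 \<and>
           scaleR (1 / onorm T) (T xo) =
             scaleR (1 / onorm (T \<circ> cadjoint T \<circ> T)) ((T \<circ> cadjoint T \<circ> T) xo) \<and>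
           norm (T xo) = onorm T \<and>
           norm ((T \<circ> cadjoint T \<circ> T) xo) = onorm (T \<circ> cadjoint T \<circ> T)))"
proof (intro conjI impI; (elim conjE)?)
  show "onorm (\<lambda>x. T x + T (cadjoint T (T x))) = onorm T + onorm T ^ 3"
    using onorm_scaleR_plus_T_cadjoint_T[OF assms, of 1] by simp
  assume "T \<noteq> (\<lambda>x. 0)" and "dist_compact T < onorm T \<or>
      dist_compact (T \<circ> cadjoint T \<circ> T) < onorm (T \<circ> cadjoint T \<circ> T)"
  then obtain x where x1: "norm x = 1" and eigen: "cadjoint T (T x) = (onorm T)\<^sup>2 *\<^sub>R x"
    using exists_unit_cadjoint_eigenvector[OF assms] by blast
  have norm_Tx: "norm (T x) = onorm T"
    by (rule norm_apply_eq_onorm_if_cadjoint_eigen[OF assms x1 eigen])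
  have Sx: "T (cadjoint T (T x)) = (onorm T)\<^sup>2 *\<^sub>R T x"
    using assms by (simp add: eigen bounded_clinear_def linear_simps)
  have bl: "bounded_linear T" using assms by (simp add: bounded_clinear_def)
  have "onorm T \<noteq> 0" using \<open>T \<noteq> (\<lambda>x. 0)\<close> onorm_eq_0[OF bl] by auto
  then have "0 < onorm T" using onorm_pos_le[OF bl] by simp
  then show "\<exists>xo. norm xo = 1 \<and>
      (1 / onorm T) *\<^sub>R T xo = (1 / onorm (T \<circ> cadjoint T \<circ> T)) *\<^sub>R (T \<circ> cadjoint T \<circ> T) xo \<and>
      norm (T xo) = onorm T \<and> norm ((T \<circ> cadjoint T \<circ> T) xo) = onorm (T \<circ> cadjoint T \<circ> T)"
    using x1 norm_Tx
    by (intro exI[of _ x]) (simp add: onorm_T_cadjoint_T[OF assms] Sx power2_eq_square power3_eq_cube)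
qed

end
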